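(* Let $\Sigma$ be an alphabet with $|\Sigma|\geq 3$, let $\#\notin\Sigma$, and let $T,T'$ be strings over $\Sigma\cup\{\#\}$ with $d_H(T,T')=1$, where the differing position $i\in[0,|T|)$ satisfies $T[i]\neq T'[i]=\#$. Let $P$ be a periodic string of length $m$ such that $|\mathsf{occ}_T(P)|-|\mathsf{occ}_{T'}(P)|=y>0$, and suppose $\#$ occurs exactly once in $T'[i-m+1\mathinner{.\,.}i+m-1]$. Then there is a letter $c\in\Sigma$ such that the string $T''$ obtained from $T'$ by replacing $T'[i]$ with $c$ satisfies $|\mathsf{occ}_{T''}(P)|\leq|\mathsf{occ}_{T'}(P)|$.
   Context: $\mathsf{occ}_T(P)$ is the set of starting positions of occurrences of $P$ in $T$; $d_H$ is the Hamming distance. An integer $p>0$ is a period of $P$ if $P[t]=P[t+p]$ for all $t\in[0,|P|-p)$; $\mathsf{per}(P)$ is the smallest period; $P$ is periodic if $\mathsf{per}(P)\leq|P|/2$. The fragment $T'[i-m+1\mathinner{.\,.}i+m-1]$ is understood as clipped to the positions of $T'$. *)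

theory Defs
  imports Main
begin

definition occ :: "'a list \<Rightarrow> 'a list \<Rightarrow> nat set" where
  "occ T P = {j. j + length P \<le> length T \<and> take (length P) (drop j T) = P}"

definition hamming :: "'a list \<Rightarrow> 'a list \<Rightarrow> nat" where
  "hamming S U = card {j. j < length S \<and> S ! j \<noteq> U ! j}"

definition is_period :: "nat \<Rightarrow> 'a list \<Rightarrow> bool" where
  "is_period p P \<longleftrightarrow> 0 < p \<and> (\<forall>t. t + p < length P \<longrightarrow> P ! t = P ! (t + p))"

definition per :: "'a list \<Rightarrow> nat" where
  "per P = (LEAST p. is_period p P)"

definition periodic :: "'a list \<Rightarrow> bool" where
  "periodic P \<longleftrightarrow> 2 * per P \<le> length P"

end

theory Submission
  imports Defs
begin

text \<open>
  Let \<open>p = per P \<le> m/2\<close>. An occurrence of \<open>P\<close> covering position \<open>i\<close> also covers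
  \<open>i - p\<close> or \<open>i + p\<close>, and by periodicity the text agrees at \<open>i\<close> with that neighbour.
  Since \<open>|\<Sigma>| \<ge> 3\<close>, we can write at \<open>i\<close> a letter \<open>c\<close> different from both \<open>T'[i - p]\<close> and
  \<open>T'[i + p]\<close>; then no occurrence in \<open>T''\<close> covers \<open>i\<close>, and all other occurrences are
  shared with \<open>T'\<close>, so \<open>occ\<^sub>T\<^sub>'\<^sub>'(P) \<subseteq> occ\<^sub>T\<^sub>'(P)\<close>.
\<close>

lemma occ_iff_nth:
  "j \<in> occ S P \<longleftrightarrow> j + length P \<le> length S \<and> (\<forall>t<length P. S ! (j + t) = P ! t)"
  unfolding occ_def by (auto simp: list_eq_iff_nth_eq)

lemma finite_occ: "finite (occ S P)"
  by (rule finite_subset[of _ "{..length S}"]) (auto simp: occ_def)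

lemma occ_Nil_pattern: "occ S [] = {..length S}"
  by (auto simp: occ_def)

lemma is_period_per:
  assumes "P \<noteq> []"
  shows "is_period (per P) P"
proof -
  have "is_period (length P) P"
    using assms by (simp add: is_period_def)
  then show ?thesis
    unfolding per_def by (rule LeastI)
qed

lemma occ_period_nth:
  assumes "j \<in> occ S P" and "is_period p P"
    and "j \<le> k" and "k + p < j + length P"
  shows "S ! k = S ! (k + p)"
proof -
  have match: "S ! (j + t) = P ! t" if "t < length P" for t
    using assms(1) that by (simp add: occ_iff_nth)
  have "S ! k = P ! (k - j)"
    using match[of "k - j"] assms(3,4) by simp
  also have "\<dots> = P ! (k - j + p)"
    using assms(2-4) by (simp add: is_period_def)
  also have "\<dots> = S ! (k + p)"
    using match[of "k - j + p"] assms(3,4) by simp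
  finally show ?thesis .
qed

lemma occ_covering_nth_period_neighbour:
  assumes "j \<in> occ S P" and "is_period p P" and "2 * p \<le> length P"
    and "j \<le> i" and "i < j + length P"
  shows "(p \<le> i \<and> S ! i = S ! (i - p)) \<or> S ! i = S ! (i + p)"
proof (cases "j + p \<le> i")
  case True
  then have "S ! (i - p) = S ! (i - p + p)"
    using assms by (intro occ_period_nth) auto
  then show ?thesis using True by simp
next
  case False
  then show ?thesis
    using assms by (intro disjI2 occ_period_nth) auto
qed

lemma occ_list_update_subset:
  assumes "\<forall>j\<in>occ (S[i := c]) P. \<not> (j \<le> i \<and> i < j + length P)"
  shows "occ (S[i := c]) P \<subseteq> occ S P"
proof
  fix j assume j: "j \<in> occ (S[i := c]) P"
  then have "S[i := c] ! (j + t) = S ! (j + t)" if "t < length P" for t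
    using assms that by (metis nth_list_update_neq add_less_cancel_left le_add1)
  then show "j \<in> occ S P"
    using j by (simp add: occ_iff_nth)
qed

lemma occ_list_update_subset_if_avoids_period_neighbours:
  assumes "is_period p P" and "2 * p \<le> length P"
    and "c \<noteq> S ! (i - p)" and "c \<noteq> S ! (i + p)"
  shows "occ (S[i := c]) P \<subseteq> occ S P"
proof (rule occ_list_update_subset, intro ballI notI)
  fix j assume "j \<in> occ (S[i := c]) P" and "j \<le> i \<and> i < j + length P"
  then have "i < length S" and
    "(p \<le> i \<and> S[i := c] ! i = S[i := c] ! (i - p)) \<or> S[i := c] ! i = S[i := c] ! (i + p)"
    using assms(1,2) occ_covering_nth_period_neighbour by (fastforce simp: occ_def)+
  moreover have "p > 0"
    using assms(1) by (simp add: is_period_def)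
  ultimately show False
    using assms(3,4) by (auto split: if_splits)
qed

lemma ex_in_card_ge_3_avoiding:
  assumes "3 \<le> card A"
  shows "\<exists>c\<in>A. c \<noteq> a \<and> c \<noteq> b"
proof -
  have "card {a, b} \<le> 2"
    by (simp add: card_insert_le_m1)
  then have "card {a, b} < card A"
    using assms by linarith
  then have "\<not> A \<subseteq> {a, b}"
    by (metis card_mono finite.emptyI finite.insertI not_le)
  then show ?thesis by blast
qed

theorem lemma10:
  fixes \<Sigma> :: "'a set" and hash :: 'a and T T' P :: "'a list" and i m :: nat and y :: int
  assumes "3 \<le> card \<Sigma>"
    and "hash \<notin> \<Sigma>"
    and "set T \<subseteq> insert hash \<Sigma>" and "set T' \<subseteq> insert hash \<Sigma>"
    and "length T = length T'"
    and "hamming T T' = 1"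
    and "i < length T" and "T ! i \<noteq> T' ! i" and "T' ! i = hash"
    and "set P \<subseteq> insert hash \<Sigma>"
    and "periodic P" and "length P = m"
    and "int (card (occ T P)) - int (card (occ T' P)) = y" and "y > 0"
    and "card {j. j < length T' \<and> i < j + m \<and> j < i + m \<and> T' ! j = hash} = 1"
  shows "\<exists>c\<in>\<Sigma>. card (occ (T'[i := c]) P) \<le> card (occ T' P)"
proof -
  have "P \<noteq> []"
    using assms(5,13,14) by (auto simp: occ_Nil_pattern)
  then have "is_period (per P) P" and "2 * per P \<le> length P"
    using assms(11) by (auto simp: is_period_per periodic_def)
  moreover obtain c where "c \<in> \<Sigma>" "c \<noteq> T' ! (i - per P)" "c \<noteq> T' ! (i + per P)"
    using ex_in_card_ge_3_avoiding[OF assms(1)] by blast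
  ultimately have "occ (T'[i := c]) P \<subseteq> occ T' P"
    by (intro occ_list_update_subset_if_avoids_period_neighbours)
  then show ?thesis
    using \<open>c \<in> \<Sigma>\<close> card_mono[OF finite_occ] by blast
qed

end
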